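(* Let $G$ be a chordal graph and $X\subseteq V(G)$ a clique, and let $L_1,\dots,L_t$ be the evaporation sequence of $G$ with exception set $X$. If $G\setminus X$ is connected, then $L_t$ is a clique (where $L_t=\emptyset$ if $t=0$).
   Context: A vertex is simplicial if its neighborhood is a clique. For a chordal graph $G$ and a clique $X\subseteq V(G)$ (possibly empty), the evaporation sequence of $G$ with exception set $X$ is defined recursively: if $X=V(G)$ it is the empty sequence; otherwise let $L_1$ be the set of simplicial vertices of $G$ that are not in $X$ (this set is always nonempty), and the evaporation sequence is $L_1$ followed by the evaporation sequence of $G-L_1$ with exception set $X$. If the sequence is $L_1,\dots,L_t$ we say $G$ evaporates at time $t$ with exception set $X$. *)

theory Defs
  imports Main
begin

text \<open>A finite simple graph is given by a finite vertex set V and a symmetric,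
irreflexive adjacency relation E.  Subgraphs are always induced subgraphs,
given by a vertex subset S.\<close>

definition simple_graph :: "'a set \<Rightarrow> ('a \<Rightarrow> 'a \<Rightarrow> bool) \<Rightarrow> bool" where
  "simple_graph V E \<longleftrightarrow> finite V \<and> (\<forall>u v. E u v \<longrightarrow> E v u) \<and> (\<forall>v. \<not> E v v)
     \<and> (\<forall>u v. E u v \<longrightarrow> u \<in> V \<and> v \<in> V)"

definition is_clique :: "('a \<Rightarrow> 'a \<Rightarrow> bool) \<Rightarrow> 'a set \<Rightarrow> bool" where
  "is_clique E K \<longleftrightarrow> (\<forall>u\<in>K. \<forall>v\<in>K. u \<noteq> v \<longrightarrow> E u v)"

definition is_long_cycle :: "'a set \<Rightarrow> ('a \<Rightarrow> 'a \<Rightarrow> bool) \<Rightarrow> 'a list \<Rightarrow> bool" where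
  "is_long_cycle V E cs \<longleftrightarrow> distinct cs \<and> length cs \<ge> 4 \<and> set cs \<subseteq> V \<and>
     (\<forall>i < length cs. E (cs ! i) (cs ! ((i + 1) mod length cs)))"

definition has_chord :: "('a \<Rightarrow> 'a \<Rightarrow> bool) \<Rightarrow> 'a list \<Rightarrow> bool" where
  "has_chord E cs \<longleftrightarrow> (\<exists>i < length cs. \<exists>j < length cs. i \<noteq> j \<and>
     j \<noteq> (i + 1) mod length cs \<and> i \<noteq> (j + 1) mod length cs \<and> E (cs ! i) (cs ! j))"

definition chordal :: "'a set \<Rightarrow> ('a \<Rightarrow> 'a \<Rightarrow> bool) \<Rightarrow> bool" where
  "chordal V E \<longleftrightarrow> simple_graph V E \<and> (\<forall>cs. is_long_cycle V E cs \<longrightarrow> has_chord E cs)"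

text \<open>Connectedness of the induced subgraph on S (the empty graph counts as connected).\<close>
definition connected_on :: "('a \<Rightarrow> 'a \<Rightarrow> bool) \<Rightarrow> 'a set \<Rightarrow> bool" where
  "connected_on E S \<longleftrightarrow> (\<forall>u\<in>S. \<forall>v\<in>S. \<exists>p. p \<noteq> [] \<and> hd p = u \<and> last p = v \<and>
     set p \<subseteq> S \<and> (\<forall>i. Suc i < length p \<longrightarrow> E (p ! i) (p ! Suc i)))"

definition simplicial :: "('a \<Rightarrow> 'a \<Rightarrow> bool) \<Rightarrow> 'a set \<Rightarrow> 'a \<Rightarrow> bool" where
  "simplicial E S v \<longleftrightarrow> v \<in> S \<and> is_clique E {u \<in> S. E v u}"

text \<open>Evaporation sequence of the induced subgraph on S with exception set X:
  evap_seq E X S Ls means Ls = [L_1,...,L_t].\<close>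
inductive evap_seq :: "('a \<Rightarrow> 'a \<Rightarrow> bool) \<Rightarrow> 'a set \<Rightarrow> 'a set \<Rightarrow> 'a set list \<Rightarrow> bool"
  for E X where
  evap_done: "S = X \<Longrightarrow> evap_seq E X S []"
| evap_step: "S \<noteq> X \<Longrightarrow> L = {v \<in> S - X. simplicial E S v} \<Longrightarrow>
     evap_seq E X (S - L) Ls \<Longrightarrow> evap_seq E X S (L # Ls)"

end

theory Submission
  imports Defs
begin

text \<open>A walk through a simplicial vertex \<open>s\<close> can skip it: the two neighbours of \<open>s\<close> on the walk
are equal or adjacent.  Hence walks can be shortened until no interior vertex is simplicial.  This
gives both halves of the argument: deleting the layer \<open>L\<^sub>i\<close> keeps \<open>G - X\<close> connected, and in the last
step \<open>L\<^sub>t = V(G\<^sub>t) - X\<close> is a connected set of simplicial vertices, so a shortest walk between two of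
its vertices has no interior vertex at all, i.e. they are adjacent.  Chordality is used only for the
symmetry of the adjacency relation.\<close>

fun is_walk :: "('a \<Rightarrow> 'a \<Rightarrow> bool) \<Rightarrow> 'a set \<Rightarrow> 'a list \<Rightarrow> bool" where
  "is_walk E T [] = False"
| "is_walk E T [x] = (x \<in> T)"
| "is_walk E T (x # y # r) = (x \<in> T \<and> E x y \<and> is_walk E T (y # r))"

lemma is_walk_iff:
  "is_walk E T p \<longleftrightarrow>
     p \<noteq> [] \<and> set p \<subseteq> T \<and> (\<forall>i. Suc i < length p \<longrightarrow> E (p ! i) (p ! Suc i))"
  by (induction E T p rule: is_walk.induct) (auto simp: nth_Cons split: nat.splits)

lemma connected_on_iff_walk:
  "connected_on E S \<longleftrightarrow> (\<forall>u\<in>S. \<forall>v\<in>S. \<exists>p. is_walk E S p \<and> hd p = u \<and> last p = v)"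
  unfolding connected_on_def is_walk_iff by blast

lemma is_walk_set: "is_walk E T p \<Longrightarrow> set p \<subseteq> T"
  by (simp add: is_walk_iff)

lemma is_walk_mono: "is_walk E T p \<Longrightarrow> set p \<subseteq> T' \<Longrightarrow> is_walk E T' p"
  by (induction E T p rule: is_walk.induct) auto

lemma is_walk_append:
  "is_walk E T (xs @ y # ys) \<longleftrightarrow> is_walk E T (xs @ [y]) \<and> is_walk E T (y # ys)"
proof (induction xs)
  case Nil
  then show ?case by (cases ys) auto
next
  case (Cons a xs)
  then show ?case by (cases xs) auto
qed

lemma is_walk_bypass_simplicial:
  assumes walk: "is_walk E T (xs @ a # s # b # ys)"
    and "simplicial E S s" "T \<subseteq> S" "symp E"
  shows "\<exists>q. is_walk E T q \<and> hd q = hd (xs @ a # s # b # ys)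
    \<and> last q = last (xs @ a # s # b # ys) \<and> length q < length (xs @ a # s # b # ys)"
proof -
  have prefix: "is_walk E T (xs @ [a])" and middle: "is_walk E T (a # s # b # ys)"
    using walk is_walk_append[of E T xs a "s # b # ys"] by auto
  then have suffix: "is_walk E T (b # ys)" and "a \<in> T" "E a s" "E s b" by auto
  have "b \<in> T" using suffix by (cases ys) auto
  show ?thesis
  proof (cases "a = b")
    case True
    then show ?thesis
      using prefix suffix is_walk_append[of E T xs b ys]
      by (intro exI[of _ "xs @ b # ys"]) (auto simp: hd_append)
  next
    case False
    have "E s a" using \<open>E a s\<close> \<open>symp E\<close> by (blast dest: sympD)
    then have "E a b"
      using \<open>simplicial E S s\<close> \<open>E s b\<close> \<open>a \<in> T\<close> \<open>b \<in> T\<close> \<open>T \<subseteq> S\<close> False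
      unfolding simplicial_def is_clique_def by blast
    then show ?thesis
      using prefix suffix \<open>a \<in> T\<close>
      using is_walk_append[of E T xs a "b # ys"]
      by (intro exI[of _ "xs @ a # b # ys"]) (auto simp: hd_append)
  qed
qed

lemma interior_split:
  assumes "s \<in> set (butlast (tl p))"
  obtains xs a b ys where "p = xs @ a # s # b # ys"
proof -
  obtain c r where p: "p = c # r" using assms by (cases p) auto
  obtain us ws where r: "butlast r = us @ s # ws" using assms p by (auto dest: split_list)
  have "r \<noteq> []" using r by auto
  then have "p = (c # us) @ s # (ws @ [last r])"
    using p r append_butlast_last_id[of r] by simp
  moreover obtain xs a where "c # us = xs @ [a]" by (cases "c # us" rule: rev_cases) auto
  moreover obtain b ys where "ws @ [last r] = b # ys" by (cases "ws @ [last r]") auto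
  ultimately show ?thesis using that by simp
qed

lemma is_walk_avoid_simplicial_interior:
  assumes "is_walk E T p" "\<forall>v\<in>L. simplicial E S v" "T \<subseteq> S" "symp E"
  shows "\<exists>q. is_walk E T q \<and> hd q = hd p \<and> last q = last p \<and> set (butlast (tl q)) \<inter> L = {}"
  using assms(1)
proof (induction "length p" arbitrary: p rule: less_induct)
  case less
  show ?case
  proof (cases "set (butlast (tl p)) \<inter> L = {}")
    case False
    then obtain s where s: "s \<in> set (butlast (tl p))" "s \<in> L" by blast
    obtain xs a b ys where "p = xs @ a # s # b # ys" using interior_split[OF s(1)] .
    then obtain p' where "is_walk E T p'" "hd p' = hd p" "last p' = last p" "length p' < length p"
      using is_walk_bypass_simplicial[of E T xs a s b ys S] less.prems assms(2-4) \<open>s \<in> L\<close> by auto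
    then show ?thesis using less.hyps by metis
  qed (use less.prems in blast)
qed

lemma set_subset_hd_last_interior:
  "p \<noteq> [] \<Longrightarrow> set p \<subseteq> {hd p, last p} \<union> set (butlast (tl p))"
  by (induction p rule: induct_list012) (auto simp: butlast_append split: if_splits)

lemma connected_on_Diff_simplicial:
  assumes "connected_on E T" "\<forall>v\<in>L. simplicial E S v" "T \<subseteq> S" "symp E"
  shows "connected_on E (T - L)"
  unfolding connected_on_iff_walk
proof (intro ballI)
  fix u v assume "u \<in> T - L" "v \<in> T - L"
  then obtain p where "is_walk E T p" "hd p = u" "last p = v"
    using \<open>connected_on E T\<close> by (auto simp: connected_on_iff_walk)
  then obtain q where q: "is_walk E T q" "hd q = u" "last q = v" "set (butlast (tl q)) \<inter> L = {}"
    using is_walk_avoid_simplicial_interior assms(2-4) by metis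
  have "set q \<inter> L = {}"
    using set_subset_hd_last_interior[of q] q \<open>u \<in> T - L\<close> \<open>v \<in> T - L\<close> by (auto simp: is_walk_iff)
  then have "is_walk E (T - L) q" using q(1) by (auto intro: is_walk_mono dest: is_walk_set)
  then show "\<exists>q. is_walk E (T - L) q \<and> hd q = u \<and> last q = v" using q by blast
qed

lemma connected_simplicial_is_clique:
  assumes "connected_on E T" "\<forall>v\<in>T. simplicial E S v" "T \<subseteq> S" "symp E"
  shows "is_clique E T"
  unfolding is_clique_def
proof (intro ballI impI)
  fix u v assume "u \<in> T" "v \<in> T" "u \<noteq> v"
  then obtain p where "is_walk E T p" "hd p = u" "last p = v"
    using \<open>connected_on E T\<close> by (auto simp: connected_on_iff_walk)
  then obtain q where q: "is_walk E T q" "hd q = u" "last q = v" "set (butlast (tl q)) \<inter> T = {}"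
    using is_walk_avoid_simplicial_interior assms(2-4) by metis
  have "set (butlast (tl q)) \<subseteq> set q" by (cases q) (auto dest: in_set_butlastD)
  then have "set (butlast (tl q)) \<subseteq> T" using is_walk_set[OF q(1)] by (rule order_trans)
  then have "butlast (tl q) = []" using q(4) by (simp add: Int_absorb2)
  then have "q = [u, v]"
    using q(1-3) \<open>u \<noteq> v\<close> by (cases q; cases "tl q") (auto split: if_splits)
  then show "E u v" using q(1) by simp
qed

lemma evap_seq_last_is_clique:
  assumes "evap_seq E X S Ls" "X \<subseteq> S" "connected_on E (S - X)" "symp E"
  shows "is_clique E (if Ls = [] then {} else last Ls)"
  using assms
proof (induction S Ls rule: evap_seq.induct)
  case (evap_done S)
  then show ?case by (simp add: is_clique_def)
next
  case (evap_step S L Ls)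
  have simpl: "\<forall>v\<in>L. simplicial E S v" using evap_step.hyps(2) by blast
  show ?case
  proof (cases "Ls = []")
    case True
    then have "S - L = X" using evap_step.hyps(3) by (auto elim: evap_seq.cases)
    then have "L = S - X" using evap_step.hyps(2) evap_step.prems(1) by auto
    then show ?thesis
      using True connected_simplicial_is_clique[of E L S] evap_step.prems simpl by auto
  next
    case False
    have "connected_on E (S - X - L)"
      using connected_on_Diff_simplicial evap_step.prems(2,3) simpl by blast
    moreover have "S - X - L = S - L - X" "X \<subseteq> S - L"
      using evap_step.hyps(2) evap_step.prems(1) by auto
    ultimately show ?thesis using evap_step.IH evap_step.prems(3) False by auto
  qed
qed

theorem mainTheorem5:
  fixes V :: "'a set" and E :: "'a \<Rightarrow> 'a \<Rightarrow> bool" and X :: "'a set" and Ls :: "'a set list"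
  assumes "chordal V E"
    and "X \<subseteq> V" and "is_clique E X"
    and "evap_seq E X V Ls"
    and "connected_on E (V - X)"
  shows "is_clique E (if Ls = [] then {} else last Ls)"
proof -
  have "symp E" using assms(1) unfolding chordal_def simple_graph_def symp_def by blast
  then show ?thesis using evap_seq_last_is_clique assms(2,4,5) by blast
qed

end
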